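(* Let $p\geq 1$. For all $0\leq t\leq 1$ and $a\in \mathbb{C}$, \[ |a-t|^p \geq (1-t)^{p-1} (|a|^p-t), \] and for $p>1$ this inequality is strict unless $a=1$ or $t=0$. Moreover, if $p\geq 2$, then for all $0\leq t\leq 1$ and $a\in\mathbb{C}$, \[ |a-t|^p \geq (1-t)^{p-1} \left(|a|^p-t\right) + c_p \, t^{p/2} \, |a-1|^p, \qquad c_p:=\min_{0<\tau<1/2} \left((1-\tau)^p -\tau^p + p\tau^{p-1}\right), \] where $0<c_p\leq 1$. For $p=2$ this is an equality with $c_2=1$; for $p>2$ it is strict unless $a=1$ or $t=0$. *)

theory Defs
  imports Complex_Main
begin

text \<open>Real power with the usual convention x^0 = 1 (Isabelle's powr has 0 powr 0 = 0).\<close>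
definition rpow :: "real \<Rightarrow> real \<Rightarrow> real" where
  "rpow x y = (if y = 0 then 1 else x powr y)"

definition cfun :: "real \<Rightarrow> real \<Rightarrow> real" where
  "cfun p \<tau> = (1 - \<tau>) powr p - \<tau> powr p + p * \<tau> powr (p - 1)"

text \<open>c_p = min over 0 < tau < 1/2 of cfun p tau (taken as infimum; attainment is part of the theorem).\<close>
definition cconst :: "real \<Rightarrow> real" where
  "cconst p = Inf (cfun p ` {0<..<1/2})"

end

theory Submission
  imports Defs
begin

text \<open>Let \<open>d = |a - t|\<close> and \<open>r = |a|\<close>. Since \<open>r \<le> d + t = (1 - t) \<cdot> d/(1 - t) + t \<cdot> 1\<close>,
  convexity of \<open>x \<mapsto> x\<^sup>p\<close> gives \<open>r\<^sup>p \<le> (1 - t) (d/(1 - t))\<^sup>p + t\<close>, which is the first inequality;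
  strictness comes from strict convexity together with the equality case of the triangle inequality.

  For \<open>p \<ge> 2\<close>, Stewart's identity \<open>d\<^sup>2 = (1 - t)(r\<^sup>2 - t) + t |a - 1|\<^sup>2\<close> splits the problem.
  If \<open>r\<^sup>2 \<ge> t\<close>, superadditivity of \<open>x \<mapsto> x\<^bsup>p/2\<^esup>\<close> reduces it to the first inequality with
  exponent \<open>p/2\<close>. If \<open>r\<^sup>2 < t\<close>, put \<open>y = \<surd>t |a - 1|\<close>; the definition of \<open>c\<^sub>p\<close> is exactly what makes
  \<open>|y - w|\<^sup>p \<ge> w\<^sup>p - p w\<^bsup>p-1\<^esup> y + c\<^sub>p y\<^sup>p\<close> hold for all \<open>w, y > 0\<close>, and with \<open>w = y - d\<close> the remaining
  terms are monotone in \<open>w\<close>, so that only an extremal configuration has to be checked; there the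
  inequality follows from second-order expansions of \<open>(1 \<plusminus> z)\<^sup>p\<close>.\<close>

section \<open>Convexity of \<open>x powr p\<close>\<close>

lemma Bernoulli_powr_strict:
  fixes p z :: real
  assumes p: "p > 1" and z: "z \<ge> 0" "z \<noteq> 1"
  shows "1 + p * (z - 1) < z powr p"
proof (cases "z > 1")
  case True
  let ?f = "\<lambda>x::real. x powr p - p * x"
  have "?f 1 < ?f z"
  proof (rule DERIV_pos_imp_increasing_open[OF True])
    fix x :: real assume x: "1 < x" "x < z"
    have "1 powr (p - 1) < x powr (p - 1)" using x p by (intro powr_less_mono2) auto
    then have "p * x powr (p - 1) - p > 0" using p by simp
    moreover have "DERIV ?f x :> p * x powr (p - 1) - p"
      using x by (auto intro!: derivative_eq_intros)
    ultimately show "\<exists>y. DERIV ?f x :> y \<and> y > 0" by blast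
  qed (use p in \<open>intro continuous_intros; auto\<close>)
  then show ?thesis by (simp add: algebra_simps)
next
  case False
  then have z1: "z < 1" using z by simp
  let ?f = "\<lambda>x::real. p * x - x powr p"
  have "?f z < ?f 1"
  proof (rule DERIV_pos_imp_increasing_open[OF z1])
    fix x :: real assume x: "z < x" "x < 1"
    have "x powr (p - 1) < 1 powr (p - 1)" using x p z by (intro powr_less_mono2) auto
    then have "p - p * x powr (p - 1) > 0" using p by simp
    moreover have "DERIV ?f x :> p - p * x powr (p - 1)"
      using x z by (auto intro!: derivative_eq_intros)
    ultimately show "\<exists>y. DERIV ?f x :> y \<and> y > 0" by blast
  qed (use p z in \<open>intro continuous_intros continuous_on_powr'; auto\<close>)
  then show ?thesis by (simp add: algebra_simps)
qed

lemma Bernoulli_powr: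
  fixes p z :: real
  assumes "p \<ge> 1" "z \<ge> 0"
  shows "1 + p * (z - 1) \<le> z powr p"
  using Bernoulli_powr_strict[of p z] assms
  by (cases "p = 1 \<or> z = 1") auto

lemma powr_gt_tangent:
  fixes p x y :: real
  assumes p: "p > 1" and x: "x > 0" and y: "y \<ge> 0" "y \<noteq> x"
  shows "x powr p + p * x powr (p - 1) * (y - x) < y powr p"
proof -
  have "x powr p * (1 + p * (y / x - 1)) < x powr p * (y / x) powr p"
    using Bernoulli_powr_strict[OF p, of "y / x"] x y by simp
  moreover have "x powr p * (1 + p * (y / x - 1)) = x powr p + p * x powr (p - 1) * (y - x)"
    using x by (simp add: powr_diff field_simps)
  ultimately show ?thesis
    using x y by (simp add: powr_divide)
qed

lemma powr_ge_tangent: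
  fixes p x y :: real
  assumes "p \<ge> 1" "x > 0" "y \<ge> 0"
  shows "x powr p + p * x powr (p - 1) * (y - x) \<le> y powr p"
  using powr_gt_tangent[of p x y] assms
  by (cases "p = 1 \<or> y = x") auto

lemma powr_minus_one_mult:
  fixes x p :: real
  assumes "x \<ge> 0"
  shows "x powr (p - 1) * x = x powr p"
  using powr_mult_base[OF assms, of "p - 1"] by (simp add: mult.commute)

lemma powr_convex_le:
  fixes P l u v :: real
  assumes P: "P \<ge> 1" and l: "0 \<le> l" "l \<le> 1" and uv: "u \<ge> 0" "v \<ge> 0"
  shows "(l * u + (1 - l) * v) powr P \<le> l * u powr P + (1 - l) * v powr P"
proof (cases "l * u + (1 - l) * v = 0")
  case True
  then show ?thesis using l uv by simp
next
  case False
  define m where "m = l * u + (1 - l) * v"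
  have "m \<ge> 0" using l uv by (simp add: m_def)
  with False have m: "m > 0" by (simp add: m_def)
  let ?T = "\<lambda>z. m powr P + P * m powr (P - 1) * (z - m)"
  have "l * ?T u \<le> l * u powr P" "(1 - l) * ?T v \<le> (1 - l) * v powr P"
    using powr_ge_tangent[OF P m] l uv by (simp_all add: mult_left_mono)
  moreover have "l * ?T u + (1 - l) * ?T v = m powr P"
    by (simp add: m_def algebra_simps)
  ultimately show ?thesis unfolding m_def by linarith
qed

lemma powr_strict_convex_less:
  fixes P l u v :: real
  assumes P: "P > 1" and l: "0 < l" "l < 1" and uv: "u \<ge> 0" "v \<ge> 0" "u \<noteq> v"
  shows "(l * u + (1 - l) * v) powr P < l * u powr P + (1 - l) * v powr P"
proof -
  define m where "m = l * u + (1 - l) * v"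
  have "m - u = (1 - l) * (v - u)" by (simp add: m_def algebra_simps)
  then have um: "u \<noteq> m" using l uv by auto
  have m: "m > 0" using l uv unfolding m_def
    by (smt (verit) mult_nonneg_nonneg mult_pos_pos)
  let ?T = "\<lambda>z. m powr P + P * m powr (P - 1) * (z - m)"
  have "l * ?T u < l * u powr P"
    using powr_gt_tangent[OF P m uv(1)] um l by simp
  moreover have "(1 - l) * ?T v \<le> (1 - l) * v powr P"
    using powr_ge_tangent[OF _ m uv(2)] P l by (simp add: mult_left_mono)
  moreover have "l * ?T u + (1 - l) * ?T v = m powr P"
    by (simp add: m_def algebra_simps)
  ultimately show ?thesis unfolding m_def by linarith
qed

lemma powr_mult_rescale:
  fixes P e d :: real
  assumes "e > 0" "d \<ge> 0"
  shows "e powr (P - 1) * (e * (d / e) powr P) = d powr P"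
  using assms by (simp add: powr_divide powr_diff)

lemma shifted_powr_le:
  fixes P t r d :: real
  assumes P: "P \<ge> 1" and t: "0 \<le> t" "t < 1" and rd: "0 \<le> r" "0 \<le> d" "r \<le> d + t"
  shows "(1 - t) powr (P - 1) * (r powr P - t) \<le> d powr P"
proof -
  have "r powr P \<le> (d + t) powr P" using P rd by (intro powr_mono2) auto
  also have "d + t = (1 - t) * (d / (1 - t)) + (1 - (1 - t)) * 1" using t by simp
  also have "\<dots> powr P \<le> (1 - t) * (d / (1 - t)) powr P + t"
    using powr_convex_le[OF P, of "1 - t" "d / (1 - t)" 1] t rd by simp
  finally have "r powr P - t \<le> (1 - t) * (d / (1 - t)) powr P" by simp
  from mult_left_mono[OF this, of "(1 - t) powr (P - 1)"] show ?thesis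
    using powr_mult_rescale[of "1 - t" d P] t rd by simp
qed

text \<open>The monotonicity and the convexity step of \<open>shifted_powr_le\<close> are both equalities only
  if \<open>r = d + t\<close> and \<open>d / (1 - t) = 1\<close>.\<close>

lemma shifted_powr_less:
  fixes P t r d :: real
  assumes P: "P > 1" and t: "0 < t" "t < 1" and rd: "0 \<le> r" "0 \<le> d" "r \<le> d + t"
    and ne: "\<not> (r = 1 \<and> d = 1 - t)"
  shows "(1 - t) powr (P - 1) * (r powr P - t) < d powr P"
proof -
  have convex: "(d + t) powr P \<le> (1 - t) * (d / (1 - t)) powr P + t"
    using powr_convex_le[of P "1 - t" "d / (1 - t)" 1] P t rd by simp
  have "r powr P < (1 - t) * (d / (1 - t)) powr P + t"
  proof (cases "r < d + t")
    case True
    then have "r powr P < (d + t) powr P" using P rd by (intro powr_less_mono2) auto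
    then show ?thesis using convex by linarith
  next
    case False
    then have r: "r = d + t" using rd by simp
    then have "d / (1 - t) \<noteq> 1" using ne t by auto
    then have "((1 - t) * (d / (1 - t)) + (1 - (1 - t)) * 1) powr P
        < (1 - t) * (d / (1 - t)) powr P + (1 - (1 - t)) * 1 powr P"
      using t rd by (intro powr_strict_convex_less[OF P]) auto
    then show ?thesis using r t by simp
  qed
  then have "r powr P - t < (1 - t) * (d / (1 - t)) powr P" by simp
  from mult_strict_left_mono[OF this, of "(1 - t) powr (P - 1)"] show ?thesis
    using powr_mult_rescale[of "1 - t" d P] t rd by simp
qed

section \<open>The inequality for \<open>p \<ge> 1\<close>\<close>

lemma norm_le_norm_diff_of_real:
  fixes a :: "'a::real_normed_algebra_1"
  assumes "t \<ge> 0"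
  shows "norm a \<le> norm (a - of_real t) + t"
  using norm_triangle_ineq[of "a - of_real t" "of_real t"] assms by simp

lemma eq_1_if_norm_diff_of_real:
  fixes a :: complex
  assumes "cmod a = 1" "cmod (a - complex_of_real t) = 1 - t" "t > 0"
  shows "a = 1"
proof -
  have "(Re a)\<^sup>2 + (Im a)\<^sup>2 = 1" using assms(1) cmod_power2[of a] by simp
  moreover have "(Re a - t)\<^sup>2 + (Im a)\<^sup>2 = (1 - t)\<^sup>2"
    using assms(2) cmod_power2[of "a - complex_of_real t"] by simp
  ultimately have "Re a = 1" "Im a = 0" using assms(3) by (auto simp: power2_eq_square algebra_simps)
  then show ?thesis by (simp add: complex_eq_iff)
qed

lemma norm_diff_of_real_powr_ge:
  fixes a :: "'a::real_normed_algebra_1"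
  assumes "P \<ge> 1" "0 \<le> t" "t < 1"
  shows "(1 - t) powr (P - 1) * (norm a powr P - t) \<le> norm (a - of_real t) powr P"
  using shifted_powr_le[of P t "norm a" "norm (a - of_real t)"] norm_le_norm_diff_of_real[of t a] assms
  by simp

lemma norm_diff_of_real_powr_less:
  fixes a :: complex
  assumes "P > 1" "0 < t" "t < 1" "a \<noteq> 1"
  shows "(1 - t) powr (P - 1) * (cmod a powr P - t) < cmod (a - complex_of_real t) powr P"
  using shifted_powr_less[of P t "cmod a" "cmod (a - complex_of_real t)"]
    eq_1_if_norm_diff_of_real[of a t] norm_le_norm_diff_of_real[of t a] assms
  by auto

lemma rpow_pos: "x > 0 \<Longrightarrow> rpow x y = x powr y"
  by (simp add: rpow_def)

lemma rpow_norm_diff_of_real_powr_ge: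
  fixes a :: complex
  assumes p: "p \<ge> 1" and t: "0 \<le> t" "t \<le> 1"
  shows "rpow (1 - t) (p - 1) * (cmod a powr p - t) \<le> cmod (a - complex_of_real t) powr p"
proof (cases "t = 1")
  case True
  then show ?thesis
    using norm_le_norm_diff_of_real[of 1 a] by (cases "p = 1") (auto simp: rpow_def)
next
  case False
  then show ?thesis using norm_diff_of_real_powr_ge[OF p, of t a] t by (simp add: rpow_pos)
qed

lemma rpow_norm_diff_of_real_powr_less:
  fixes a :: complex
  assumes p: "p > 1" and t: "0 < t" "t \<le> 1" and a: "a \<noteq> 1"
  shows "rpow (1 - t) (p - 1) * (cmod a powr p - t) < cmod (a - complex_of_real t) powr p"
proof (cases "t = 1")
  case True
  then show ?thesis using p a by (simp add: rpow_def)
next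
  case False
  then show ?thesis using norm_diff_of_real_powr_less[OF p, of t a] t a by (simp add: rpow_pos)
qed

section \<open>The constant \<open>c\<^sub>p\<close>\<close>

lemma cfun_zero [simp]: "cfun p 0 = 1"
  by (simp add: cfun_def)

lemma cfun_two: "0 \<le> \<tau> \<Longrightarrow> \<tau> \<le> 1 \<Longrightarrow> cfun 2 \<tau> = 1"
  by (simp add: cfun_def power2_eq_square algebra_simps)

lemma cfun_pos:
  assumes p: "p > 0" and \<tau>: "0 \<le> \<tau>" "\<tau> \<le> 1/2"
  shows "cfun p \<tau> > 0"
proof (cases "\<tau> = 0")
  case False
  have "\<tau> powr p \<le> (1 - \<tau>) powr p" using \<tau> p by (intro powr_mono2) auto
  moreover have "p * \<tau> powr (p - 1) > 0" using p \<tau> False by simp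
  ultimately show ?thesis unfolding cfun_def by linarith
qed simp

lemma cfun_half_less_1:
  assumes p: "p > 2"
  shows "cfun p (1/2) < 1"
proof -
  have "1 + (p - 1) * (2 - 1) < (2::real) powr (p - 1)"
    using Bernoulli_powr_strict[of "p - 1" 2] p by simp
  then show ?thesis using p by (simp add: cfun_def powr_divide divide_less_eq)
qed

text \<open>For \<open>p > 2\<close> the derivative of \<open>cfun p\<close> at \<open>1/2\<close> is \<open>p (p - 2) 2\<^bsup>2-p\<^esup> > 0\<close>.\<close>

lemma cfun_less_cfun_half:
  assumes p: "p > 2"
  shows "\<exists>\<tau>\<in>{0..<1/2}. cfun p \<tau> < cfun p (1/2)"
proof -
  define B where "B = (1/2::real) powr (p - 2)"
  have B: "B > 0" "(1/2::real) powr (p - 1) = B * (1/2)"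
    using powr_minus_one_mult[of "1/2" "p - 1"] by (simp_all add: B_def)
  define D where "D = - 2 * p * (1/2) powr (p - 1) + p * ((p - 1) * (1/2) powr (p - 1 - 1))"
  have "DERIV (cfun p) (1/2) :> D"
    unfolding cfun_def D_def by (auto intro!: derivative_eq_intros simp: field_simps)
  moreover have "D > 0"
  proof -
    have "D = p * B * (p - 2)" using B by (simp add: D_def B_def algebra_simps)
    then show ?thesis using p B by simp
  qed
  ultimately obtain d where d: "d > 0" "\<And>h. 0 < h \<Longrightarrow> h < d \<Longrightarrow> cfun p (1/2 - h) < cfun p (1/2)"
    using DERIV_pos_inc_left by blast
  define h where "h = min (d/2) (1/4)"
  show ?thesis
    using d by (intro bexI[of _ "1/2 - h"]) (auto simp: h_def)
qed

lemma cfun_min_attained: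
  assumes p: "p \<ge> 2"
  shows "\<exists>\<tau>\<^sub>0\<in>{0<..<1/2}. \<forall>\<tau>\<in>{0..1/2}. cfun p \<tau>\<^sub>0 \<le> cfun p \<tau>"
proof (cases "p = 2")
  case True
  show ?thesis by (rule bexI[of _ "1/4"]) (auto simp: True cfun_two)
next
  case False
  then have p2: "p > 2" using p by simp
  have "continuous_on {0..1/2} (cfun p)"
    unfolding cfun_def using p by (intro continuous_intros continuous_on_powr') auto
  then obtain \<tau>\<^sub>0 where \<tau>\<^sub>0: "\<tau>\<^sub>0 \<in> {0..1/2}" and min: "\<forall>\<tau>\<in>{0..1/2}. cfun p \<tau>\<^sub>0 \<le> cfun p \<tau>"
    using continuous_attains_inf[OF compact_Icc, of 0 "1/2" "cfun p"] by auto
  have "cfun p \<tau>\<^sub>0 \<le> cfun p (1/2)" using min by simp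
  then have "cfun p \<tau>\<^sub>0 < 1" using cfun_half_less_1[OF p2] by linarith
  then have "\<tau>\<^sub>0 \<noteq> 0" by auto
  moreover obtain \<sigma> where "\<sigma> \<in> {0..<1/2}" "cfun p \<sigma> < cfun p (1/2)"
    using cfun_less_cfun_half[OF p2] by blast
  then have "cfun p \<tau>\<^sub>0 < cfun p (1/2)" using min[rule_format, of \<sigma>] by simp
  then have "\<tau>\<^sub>0 \<noteq> 1/2" by (metis less_irrefl)
  ultimately show ?thesis using \<tau>\<^sub>0 min by (intro bexI[of _ \<tau>\<^sub>0]) auto
qed

lemma cconst_attained:
  assumes "p \<ge> 2"
  obtains \<tau>\<^sub>0 where "\<tau>\<^sub>0 \<in> {0<..<1/2}" "cconst p = cfun p \<tau>\<^sub>0" "\<And>\<tau>. \<tau> \<in> {0..1/2} \<Longrightarrow> cfun p \<tau>\<^sub>0 \<le> cfun p \<tau>"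
proof -
  obtain \<tau>\<^sub>0 where \<tau>\<^sub>0: "\<tau>\<^sub>0 \<in> {0<..<1/2}" and min: "\<forall>\<tau>\<in>{0..1/2}. cfun p \<tau>\<^sub>0 \<le> cfun p \<tau>"
    using cfun_min_attained[OF assms] by blast
  have "cconst p = cfun p \<tau>\<^sub>0"
    unfolding cconst_def by (rule cInf_eq_minimum) (use \<tau>\<^sub>0 min in auto)
  with \<tau>\<^sub>0 min that show ?thesis by blast
qed

lemma cconst_le_cfun:
  assumes "p \<ge> 2" "0 \<le> \<tau>" "\<tau> \<le> 1/2"
  shows "cconst p \<le> cfun p \<tau>"
proof -
  obtain \<tau>\<^sub>0 where "cconst p = cfun p \<tau>\<^sub>0" "\<And>\<tau>. \<tau> \<in> {0..1/2} \<Longrightarrow> cfun p \<tau>\<^sub>0 \<le> cfun p \<tau>"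
    using cconst_attained[OF assms(1)] by blast
  then show ?thesis using assms by simp
qed

lemma cconst_le_1: "p \<ge> 2 \<Longrightarrow> cconst p \<le> 1"
  using cconst_le_cfun[of p 0] by simp

lemma cconst_less_1: "p > 2 \<Longrightarrow> cconst p < 1"
  using cconst_le_cfun[of p "1/2"] cfun_half_less_1[of p] by simp

lemma cconst_pos:
  assumes "p \<ge> 2"
  shows "cconst p > 0"
proof -
  obtain \<tau>\<^sub>0 where "\<tau>\<^sub>0 \<in> {0<..<1/2}" "cconst p = cfun p \<tau>\<^sub>0"
    using cconst_attained[OF assms] by blast
  then show ?thesis using cfun_pos[of p \<tau>\<^sub>0] assms by simp
qed

lemma cconst_two: "cconst 2 = 1"
proof -
  obtain \<tau>\<^sub>0 where "\<tau>\<^sub>0 \<in> {0<..<1/2}" "cconst 2 = cfun 2 \<tau>\<^sub>0"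
    using cconst_attained[of 2] by blast
  then show ?thesis using cfun_two[of \<tau>\<^sub>0] by simp
qed

lemma cfun_reflect_le:
  assumes p: "p \<ge> 2" and \<tau>: "1/2 < \<tau>" "\<tau> < 1"
  shows "cfun p (1 - \<tau>) \<le> cfun p \<tau>"
proof -
  define \<sigma> where "\<sigma> = 1 - \<tau>"
  have \<sigma>: "0 < \<sigma>" "\<sigma> < \<tau>" using \<tau> by (auto simp: \<sigma>_def)
  define A where "A = \<tau> powr (p - 1)"
  define B where "B = \<sigma> powr (p - 1)"
  have "B * \<tau> = \<sigma> powr (p - 2) * (\<tau> * \<sigma>)"
    using powr_minus_one_mult[of \<sigma> "p - 1"] \<sigma> by (simp add: B_def algebra_simps)
  also have "\<dots> \<le> \<tau> powr (p - 2) * (\<tau> * \<sigma>)"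
    using \<sigma> p by (intro mult_right_mono powr_mono2) auto
  also have "\<dots> = A * \<sigma>"
    using powr_minus_one_mult[of \<tau> "p - 1"] \<sigma> by (simp add: A_def algebra_simps)
  finally have "A * \<tau> - B * \<sigma> \<le> A - B" by (simp add: \<sigma>_def algebra_simps)
  moreover have "2 * (A - B) \<le> p * (A - B)"
    using \<sigma> p by (intro mult_right_mono) (auto simp: A_def B_def powr_mono2)
  moreover have "\<tau> powr p = A * \<tau>" "\<sigma> powr p = B * \<sigma>"
    using powr_minus_one_mult[of \<tau> p] powr_minus_one_mult[of \<sigma> p] \<sigma> by (simp_all add: A_def B_def)
  then have "cfun p \<tau> = B * \<sigma> - A * \<tau> + p * A" "cfun p (1 - \<tau>) = A * \<tau> - B * \<sigma> + p * B"
    by (simp_all add: cfun_def \<sigma>_def A_def B_def)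
  ultimately show ?thesis by (simp add: algebra_simps)
qed

lemma cfun_extension_ge_1:
  fixes p \<tau> :: real
  assumes p: "p \<ge> 2" and \<tau>: "\<tau> \<ge> 1"
  shows "1 \<le> (\<tau> - 1) powr p - \<tau> powr p + p * \<tau> powr (p - 1)"
proof -
  define y where "y = 1 / \<tau>"
  have y: "0 \<le> y" "y \<le> 1" using \<tau> by (auto simp: y_def)
  let ?m = "\<lambda>x::real. (1 - x) powr p + p * x - x powr p"
  have "?m 0 \<le> ?m y"
  proof (rule DERIV_nonneg_imp_increasing_open[OF y(1)])
    fix x :: real assume x: "0 < x" "x < y"
    have "DERIV ?m x :> - p * (1 - x) powr (p - 1) + p - p * x powr (p - 1)"
      using x y by (auto intro!: derivative_eq_intros simp: field_simps)
    moreover have "(1 - x) powr (p - 1) \<le> (1 - x) powr 1" "x powr (p - 1) \<le> x powr 1"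
      using x y p by (intro powr_mono'; simp)+
    then have "p * ((1 - x) powr (p - 1) + x powr (p - 1)) \<le> p * 1"
      using x y p by (intro mult_left_mono) auto
    ultimately show "\<exists>d. DERIV ?m x :> d \<and> d \<ge> 0" by (auto simp: algebra_simps)
  qed (use p y in \<open>intro continuous_intros continuous_on_powr'; auto\<close>)
  then have "\<tau> powr p * 1 \<le> \<tau> powr p * ((1 - y) powr p + p * y - y powr p)"
    using p by (intro mult_left_mono) auto
  moreover have "\<tau> * (1 - y) = \<tau> - 1" using \<tau> by (simp add: y_def field_simps)
  then have "\<tau> powr p * (1 - y) powr p = (\<tau> - 1) powr p"
    using \<tau> y by (simp add: powr_mult[symmetric])
  moreover have "\<tau> powr p * y = \<tau> powr (p - 1)"
    using powr_minus_one_mult[of \<tau> p] \<tau> by (simp add: y_def field_simps)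
  moreover have "\<tau> powr p * y powr p = 1"
    using \<tau> by (simp add: powr_mult[symmetric] y_def)
  ultimately show ?thesis by (simp add: algebra_simps)
qed

text \<open>\<open>c\<^sub>p\<close> bounds the natural extension of \<open>cfun p\<close> to all \<open>\<tau> > 0\<close>: the range
  \<open>(1/2, 1)\<close> reflects to \<open>(0, 1/2)\<close>, and beyond \<open>1\<close> the extension is at least \<open>1 \<ge> c\<^sub>p\<close>.\<close>

lemma cconst_le_cfun_extension:
  fixes p \<tau> :: real
  assumes p: "p \<ge> 2" and \<tau>: "\<tau> > 0"
  shows "cconst p \<le> \<bar>1 - \<tau>\<bar> powr p - \<tau> powr p + p * \<tau> powr (p - 1)"
proof -
  consider "\<tau> \<le> 1/2" | "1/2 < \<tau>" "\<tau> < 1" | "\<tau> \<ge> 1" by linarith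
  then show ?thesis
  proof cases
    case 1
    then show ?thesis using cconst_le_cfun[OF p, of \<tau>] \<tau> by (simp add: cfun_def)
  next
    case 2
    then show ?thesis
      using cconst_le_cfun[OF p, of "1 - \<tau>"] cfun_reflect_le[OF p 2] by (simp add: cfun_def)
  next
    case 3
    then show ?thesis using cfun_extension_ge_1[OF p 3] cconst_le_1[OF p] by simp
  qed
qed

lemma powr_abs_diff_ge_cconst:
  fixes p w y :: real
  assumes p: "p \<ge> 2" and w: "w > 0" and y: "y > 0"
  shows "w powr p - p * w powr (p - 1) * y + cconst p * y powr p \<le> \<bar>y - w\<bar> powr p"
proof -
  define \<tau> where "\<tau> = w / y"
  have "y powr p * cconst p \<le> y powr p * (\<bar>1 - \<tau>\<bar> powr p - \<tau> powr p + p * \<tau> powr (p - 1))"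
    using cconst_le_cfun_extension[OF p, of \<tau>] w y by (intro mult_left_mono) (auto simp: \<tau>_def)
  moreover have "y powr p * \<bar>1 - \<tau>\<bar> powr p = \<bar>y - w\<bar> powr p"
    using y by (simp add: \<tau>_def powr_mult[symmetric] abs_mult[symmetric] field_simps)
  moreover have "y powr p * \<tau> powr p = w powr p"
    using y w by (simp add: \<tau>_def powr_mult[symmetric])
  moreover have "y powr p * \<tau> powr (p - 1) = w powr (p - 1) * y"
    using powr_minus_one_mult[of y p] y w
    by (simp add: \<tau>_def powr_divide field_simps)
  ultimately show ?thesis by (simp add: algebra_simps)
qed

section \<open>The inequality for \<open>p \<ge> 2\<close>\<close>

lemma powr_one_plus_ge_quadratic:
  fixes p z :: real
  assumes p: "p \<ge> 2" and z: "z \<ge> 0"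
  shows "1 + p * z + p * (p - 1) / 2 * z\<^sup>2 \<le> (1 + z) powr p"
    and "p > 2 \<Longrightarrow> z > 0 \<Longrightarrow> 1 + p * z + p * (p - 1) / 2 * z\<^sup>2 < (1 + z) powr p"
proof -
  let ?k = "\<lambda>x::real. (1 + x) powr p - p * x - p * (p - 1) / 2 * x\<^sup>2"
  let ?k' = "\<lambda>x::real. p * (1 + x) powr (p - 1) - p - p * (p - 1) * x"
  have der: "DERIV ?k x :> ?k' x" if "x \<ge> 0" for x
    using that by (auto intro!: derivative_eq_intros simp: power2_eq_square field_simps)
  have "?k' x \<ge> 0" if "x \<ge> 0" for x
  proof -
    have "p * (1 + (p - 1) * x) \<le> p * (1 + x) powr (p - 1)"
      using Bernoulli_powr[of "p - 1" "1 + x"] p that by (intro mult_left_mono) auto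
    then show ?thesis by (simp add: algebra_simps)
  qed
  then have "?k 0 \<le> ?k z"
    using der by (intro DERIV_nonneg_imp_nondecreasing[OF z]) blast
  then show "1 + p * z + p * (p - 1) / 2 * z\<^sup>2 \<le> (1 + z) powr p" by simp
  assume p2: "p > 2" and z0: "z > 0"
  have "?k 0 < ?k z"
  proof (rule DERIV_pos_imp_increasing_open[OF z0])
    fix x :: real assume x: "0 < x" "x < z"
    have "p * (1 + (p - 1) * x) < p * (1 + x) powr (p - 1)"
      using Bernoulli_powr_strict[of "p - 1" "1 + x"] p2 x by (intro mult_strict_left_mono) auto
    then show "\<exists>y. DERIV ?k x :> y \<and> y > 0"
      using der[of x] x by (intro exI[of _ "?k' x"]) (auto simp: algebra_simps)
  qed (intro continuous_intros; auto)
  then show "1 + p * z + p * (p - 1) / 2 * z\<^sup>2 < (1 + z) powr p" by simp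
qed

lemma powr_one_minus_le_quadratic:
  fixes p z :: real
  assumes p: "p \<ge> 2" and z: "0 \<le> z" "z \<le> 1"
  shows "(1 - z) powr p \<le> 1 - p * z + p * (p - 1) / 2 * z\<^sup>2"
proof -
  let ?k = "\<lambda>x::real. - p * x + p * (p - 1) / 2 * x\<^sup>2 - (1 - x) powr p"
  have "?k 0 \<le> ?k z"
  proof (rule DERIV_nonneg_imp_increasing_open[OF z(1)])
    fix x :: real assume x: "0 < x" "x < z"
    have "DERIV ?k x :> - p + p * (p - 1) * x + p * (1 - x) powr (p - 1)"
      using x z by (auto intro!: derivative_eq_intros simp: power2_eq_square field_simps)
    moreover have "p * (1 - (p - 1) * x) \<le> p * (1 - x) powr (p - 1)"
      using Bernoulli_powr[of "p - 1" "1 - x"] p x z by (intro mult_left_mono) auto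
    ultimately show "\<exists>y. DERIV ?k x :> y \<and> y \<ge> 0" by (auto simp: algebra_simps)
  qed (use p z in \<open>intro continuous_intros continuous_on_powr'; auto\<close>)
  then show ?thesis by simp
qed

text \<open>With \<open>w = (1 - \<rho>) / \<rho>\<close> one has \<open>r = \<rho> (1 - s w)\<close> and \<open>\<rho> (1 + w) = 1\<close>; the bound
  follows by expanding \<open>(1 - s w)\<^sup>p\<close> from above and \<open>(1 + w)\<^sup>p\<close> from below to second order.\<close>

lemma extremal_powr_bound:
  fixes p s \<rho> r :: real
  assumes p: "p \<ge> 2" and s: "0 \<le> s" "s \<le> 1" and \<rho>: "0 < \<rho>" "\<rho> \<le> 1"
    and r: "r = \<rho> - s * (1 - \<rho>)" "r \<ge> 0"
  shows "r powr p \<le> (1 - s\<^sup>2) * \<rho> powr p - p * s * (1 + s) * \<rho> powr (p - 1) * (1 - \<rho>) + s\<^sup>2"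
    and "p > 2 \<Longrightarrow> s > 0 \<Longrightarrow> \<rho> < 1 \<Longrightarrow>
         r powr p < (1 - s\<^sup>2) * \<rho> powr p - p * s * (1 + s) * \<rho> powr (p - 1) * (1 - \<rho>) + s\<^sup>2"
proof -
  define w where "w = (1 - \<rho>) / \<rho>"
  define Q where "Q x = 1 + p * x + p * (p - 1) / 2 * x\<^sup>2" for x
  have w: "w \<ge> 0" using \<rho> by (simp add: w_def)
  have sw: "0 \<le> s * w" "s * w \<le> 1"
    using s w r \<rho> by (simp, simp add: w_def field_simps)
  have "(\<rho> * (1 - s * w)) powr p \<le> \<rho> powr p * (1 - p * (s * w) + p * (p - 1) / 2 * (s * w)\<^sup>2)"
    using powr_one_minus_le_quadratic[OF p sw] \<rho> sw by (simp add: powr_mult mult_left_mono)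
  moreover have "\<rho> * (1 - s * w) = \<rho> - s * (\<rho> * w)" by (simp add: algebra_simps)
  then have "\<rho> * (1 - s * w) = r" using \<rho> r by (simp add: w_def)
  ultimately have upper: "r powr p \<le> \<rho> powr p * (1 - p * (s * w) + p * (p - 1) / 2 * (s * w)\<^sup>2)"
    by simp
  have one: "\<rho> powr p * (1 + w) powr p = 1"
    using \<rho> by (simp add: w_def powr_mult[symmetric] field_simps)
  have lower: "\<rho> powr p * Q w \<le> 1"
    using mult_left_mono[OF powr_one_plus_ge_quadratic(1)[OF p w], of "\<rho> powr p"] one
    by (simp add: Q_def)
  have "\<rho> powr (p - 1) * (1 - \<rho>) = \<rho> powr p * w"
    using powr_minus_one_mult[of \<rho> p] \<rho> by (simp add: w_def field_simps)
  then have tangent_term: "p * s * (1 + s) * \<rho> powr (p - 1) * (1 - \<rho>) = p * s * (1 + s) * (\<rho> powr p * w)"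
    by (simp add: mult.assoc)
  have rhs: "(1 - s\<^sup>2) * \<rho> powr p - p * s * (1 + s) * \<rho> powr (p - 1) * (1 - \<rho>) + s\<^sup>2
      = \<rho> powr p * (1 - p * (s * w) + p * (p - 1) / 2 * (s * w)\<^sup>2) + s\<^sup>2 * (1 - \<rho> powr p * Q w)"
    unfolding tangent_term by (simp add: Q_def power2_eq_square algebra_simps)
  show "r powr p \<le> (1 - s\<^sup>2) * \<rho> powr p - p * s * (1 + s) * \<rho> powr (p - 1) * (1 - \<rho>) + s\<^sup>2"
    unfolding rhs using upper lower by (simp add: add_increasing2)
  assume p2: "p > 2" and s0: "s > 0" and \<rho>1: "\<rho> < 1"
  have "w > 0" using \<rho> \<rho>1 by (simp add: w_def)
  then have "\<rho> powr p * Q w < 1"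
    using mult_strict_left_mono[OF powr_one_plus_ge_quadratic(2)[OF p w p2], of "\<rho> powr p"] one \<rho>
    by (simp add: Q_def)
  then have "0 < s\<^sup>2 * (1 - \<rho> powr p * Q w)" using s0 by simp
  then show "r powr p < (1 - s\<^sup>2) * \<rho> powr p - p * s * (1 + s) * \<rho> powr (p - 1) * (1 - \<rho>) + s\<^sup>2"
    unfolding rhs using upper by linarith
qed

lemma powr_tangent_form_eq:
  fixes p v y W :: real
  assumes v: "v > 0" and y: "2 * v * y = v\<^sup>2 + W"
  shows "v powr p - p * v powr (p - 1) * y = v powr (p - 2) * ((1 - p/2) * v\<^sup>2 - p/2 * W)"
proof -
  have e1: "v powr (p - 1) = v powr (p - 2) * v"
    using powr_minus_one_mult[of v "p - 1"] v by simp
  have e2: "v powr p = v powr (p - 2) * v\<^sup>2"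
    using powr_minus_one_mult[of v p] e1 v by (simp add: power2_eq_square mult.assoc)
  have "p * v powr (p - 1) * y = p/2 * v powr (p - 2) * (2 * v * y)" by (simp add: e1 algebra_simps)
  also have "\<dots> = p/2 * v powr (p - 2) * (v\<^sup>2 + W)" by (simp add: y)
  finally show ?thesis by (simp add: e2 algebra_simps)
qed

lemma powr_tangent_form_antimono:
  fixes p W v\<^sub>1 v\<^sub>2 :: real
  assumes p: "p \<ge> 2" and W: "W > 0" and v: "0 < v\<^sub>1" "v\<^sub>1 \<le> v\<^sub>2"
  shows "v\<^sub>2 powr (p - 2) * ((1 - p/2) * v\<^sub>2\<^sup>2 - p/2 * W) \<le> v\<^sub>1 powr (p - 2) * ((1 - p/2) * v\<^sub>1\<^sup>2 - p/2 * W)"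
proof -
  have "(1 - p/2) * v\<^sub>2\<^sup>2 \<le> (1 - p/2) * v\<^sub>1\<^sup>2"
    using p v by (intro mult_left_mono_neg power_mono) auto
  then have "v\<^sub>2 powr (p - 2) * ((1 - p/2) * v\<^sub>2\<^sup>2 - p/2 * W)
      \<le> v\<^sub>2 powr (p - 2) * ((1 - p/2) * v\<^sub>1\<^sup>2 - p/2 * W)"
    by (intro mult_left_mono) auto
  also have "\<dots> \<le> v\<^sub>1 powr (p - 2) * ((1 - p/2) * v\<^sub>1\<^sup>2 - p/2 * W)"
  proof (rule mult_right_mono_neg)
    show "v\<^sub>1 powr (p - 2) \<le> v\<^sub>2 powr (p - 2)" using p v by (intro powr_mono2) auto
    have "(1 - p/2) * v\<^sub>1\<^sup>2 \<le> 0" using p by (intro mult_nonpos_nonneg) auto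
    moreover have "0 \<le> p/2 * W" using p W by simp
    ultimately show "(1 - p/2) * v\<^sub>1\<^sup>2 - p/2 * W \<le> 0" by linarith
  qed
  finally show ?thesis .
qed

text \<open>At the extremal configuration \<open>w = (1 - s) (s + r)\<close>, \<open>y = s (1 - r)\<close> the bound is
  \<open>extremal_powr_bound\<close> with \<open>\<rho> = (r + s) / (1 + s)\<close>, rescaled by \<open>(1 - s\<^sup>2)\<^bsup>p\<^esup>\<close>.\<close>

lemma extremal_tangent_form_bound:
  fixes p s r :: real
  assumes p: "p \<ge> 2" and s: "0 < s" "s < 1" and r: "0 \<le> r" "r < s"
  defines "w \<equiv> (1 - s) * (s + r)" and "y \<equiv> s * (1 - r)"
  shows "(1 - s\<^sup>2) powr (p - 1) * (r powr p - s\<^sup>2) \<le> w powr p - p * w powr (p - 1) * y"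
    and "p > 2 \<Longrightarrow> (1 - s\<^sup>2) powr (p - 1) * (r powr p - s\<^sup>2) < w powr p - p * w powr (p - 1) * y"
proof -
  define \<rho> where "\<rho> = (r + s) / (1 + s)"
  have \<rho>: "0 < \<rho>" "\<rho> < 1" using s r by (auto simp: \<rho>_def field_simps)
  have "\<rho> * (1 + s) = r + s" using s by (simp add: \<rho>_def)
  then have r\<rho>: "r = \<rho> - s * (1 - \<rho>)" by (simp add: algebra_simps)
  define K where "K = (1 - s\<^sup>2) powr (p - 1)"
  have s2: "0 < 1 - s\<^sup>2" using s by (simp add: power_less_one_iff)
  have "w = (1 - s\<^sup>2) * \<rho>" using s by (simp add: w_def \<rho>_def field_simps power2_eq_square)
  then have wp: "w powr p = K * (1 - s\<^sup>2) * \<rho> powr p" "w powr (p - 1) = K * \<rho> powr (p - 1)"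
    using powr_minus_one_mult[of "1 - s\<^sup>2" p] s2 by (simp_all add: powr_mult K_def)
  have yp: "y = s * (1 + s) * (1 - \<rho>)" using s by (simp add: y_def \<rho>_def field_simps)
  have form: "w powr p - p * w powr (p - 1) * y
      = K * ((1 - s\<^sup>2) * \<rho> powr p - p * s * (1 + s) * \<rho> powr (p - 1) * (1 - \<rho>))"
    unfolding wp yp by (simp add: algebra_simps)
  have K: "K > 0" using s2 by (simp add: K_def)
  show "(1 - s\<^sup>2) powr (p - 1) * (r powr p - s\<^sup>2) \<le> w powr p - p * w powr (p - 1) * y"
    unfolding form K_def[symmetric] using extremal_powr_bound(1)[OF p _ _ _ _ r\<rho>] s r \<rho> K
    by (intro mult_left_mono) auto
  show "(1 - s\<^sup>2) powr (p - 1) * (r powr p - s\<^sup>2) < w powr p - p * w powr (p - 1) * y" if "p > 2"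
    unfolding form K_def[symmetric] using extremal_powr_bound(2)[OF p _ _ _ _ r\<rho> _ that] s r \<rho> K
    by (intro mult_strict_left_mono) auto
qed

text \<open>Write \<open>d = y - w\<close>. After eliminating \<open>y\<close> through \<open>w (2 y - w) = y\<^sup>2 - d\<^sup>2 = W\<close>, the
  tangent term \<open>w\<^sup>p - p w\<^bsup>p-1\<^esup> y\<close> of \<open>powr_abs_diff_ge_cconst\<close> is decreasing in \<open>w\<close>, and \<open>w\<close> is
  largest at the extremal configuration.\<close>

lemma small_modulus_bound:
  fixes p s r d y :: real
  assumes p: "p \<ge> 2" and s: "0 < s" "s < 1" and r: "0 \<le> r" "r < s"
    and d: "d \<ge> 0" "d \<ge> s\<^sup>2 - r" and y: "y \<ge> s * (1 - r)"
    and yd: "y\<^sup>2 - d\<^sup>2 = (1 - s\<^sup>2) * (s\<^sup>2 - r\<^sup>2)"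
  shows "(1 - s\<^sup>2) powr (p - 1) * (r powr p - s\<^sup>2) + cconst p * y powr p \<le> d powr p"
    and "p > 2 \<Longrightarrow> (1 - s\<^sup>2) powr (p - 1) * (r powr p - s\<^sup>2) + cconst p * y powr p < d powr p"
proof -
  define W where "W = (1 - s\<^sup>2) * (s\<^sup>2 - r\<^sup>2)"
  define w where "w = y - d"
  define w\<^sub>0 where "w\<^sub>0 = (1 - s) * (s + r)"
  define y\<^sub>0 where "y\<^sub>0 = s * (1 - r)"
  have W: "W > 0"
    using s r by (simp add: W_def power_less_one_iff power_strict_mono)
  have "s * (1 - r) > 0" using s r by simp
  then have y0: "y > 0" using y by linarith
  have "d < y"
  proof (rule ccontr)
    assume "\<not> d < y"
    then have "y\<^sup>2 \<le> d\<^sup>2" using y0 by (intro power_mono) auto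
    then show False using yd W by (simp add: W_def)
  qed
  then have wy: "w > 0" "y > 0" using y0 by (auto simp: w_def)
  have "w \<le> w\<^sub>0"
  proof (rule ccontr)
    define P where "P = (1 + s) * (s - r)"
    assume "\<not> w \<le> w\<^sub>0"
    moreover have "P > 0" using s r by (simp add: P_def)
    ultimately have "w\<^sub>0 * P < w * P" by (intro mult_strict_right_mono) auto
    also have "\<dots> \<le> w * (y + d)"
      using d y wy by (intro mult_left_mono) (auto simp: P_def power2_eq_square algebra_simps)
    also have "\<dots> = w\<^sub>0 * P"
      using yd by (simp add: w_def w\<^sub>0_def P_def W_def power2_eq_square algebra_simps)
    finally show False by simp
  qed
  have "w powr p - p * w powr (p - 1) * y = w powr (p - 2) * ((1 - p/2) * w\<^sup>2 - p/2 * W)"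
    using yd by (intro powr_tangent_form_eq wy) (simp add: w_def W_def power2_eq_square algebra_simps)
  moreover have "w\<^sub>0 powr p - p * w\<^sub>0 powr (p - 1) * y\<^sub>0 = w\<^sub>0 powr (p - 2) * ((1 - p/2) * w\<^sub>0\<^sup>2 - p/2 * W)"
  proof (rule powr_tangent_form_eq)
    show "w\<^sub>0 > 0" using s r by (simp add: w\<^sub>0_def)
    show "2 * w\<^sub>0 * y\<^sub>0 = w\<^sub>0\<^sup>2 + W" by (simp add: w\<^sub>0_def y\<^sub>0_def W_def power2_eq_square algebra_simps)
  qed
  ultimately have mono: "w\<^sub>0 powr p - p * w\<^sub>0 powr (p - 1) * y\<^sub>0 \<le> w powr p - p * w powr (p - 1) * y"
    using powr_tangent_form_antimono[OF p W wy(1) \<open>w \<le> w\<^sub>0\<close>] by simp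
  have tangent: "w powr p - p * w powr (p - 1) * y + cconst p * y powr p \<le> d powr p"
    using powr_abs_diff_ge_cconst[OF p wy] d by (simp add: w_def)
  note extremal = extremal_tangent_form_bound[OF p s r, folded w\<^sub>0_def y\<^sub>0_def]
  show "(1 - s\<^sup>2) powr (p - 1) * (r powr p - s\<^sup>2) + cconst p * y powr p \<le> d powr p"
    using mono tangent extremal(1) by linarith
  show "(1 - s\<^sup>2) powr (p - 1) * (r powr p - s\<^sup>2) + cconst p * y powr p < d powr p" if "p > 2"
    using mono tangent extremal(2)[OF that] by linarith
qed

lemma powr_add_ge_add_powr:
  fixes X Y q :: real
  assumes X: "X \<ge> 0" and Y: "Y \<ge> 0" and q: "q \<ge> 1"
  shows "X powr q + Y powr q \<le> (X + Y) powr q"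
    and "X > 0 \<Longrightarrow> Y > 0 \<Longrightarrow> q > 1 \<Longrightarrow> X powr q + Y powr q < (X + Y) powr q"
proof -
  have split: "Z powr q = Z * Z powr (q - 1)" if "Z \<ge> 0" for Z
    using powr_minus_one_mult[OF that, of q] by (simp add: mult.commute)
  have "X * X powr (q - 1) \<le> X * (X + Y) powr (q - 1)" "Y * Y powr (q - 1) \<le> Y * (X + Y) powr (q - 1)"
    using X Y q by (auto intro!: mult_left_mono powr_mono2)
  then show "X powr q + Y powr q \<le> (X + Y) powr q"
    using split[OF X] split[OF Y] split[of "X + Y"] X Y by (simp add: algebra_simps)
  assume "X > 0" "Y > 0" "q > 1"
  then have "X * X powr (q - 1) < X * (X + Y) powr (q - 1)"
    by (intro mult_strict_left_mono powr_less_mono2) auto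
  with \<open>Y * Y powr (q - 1) \<le> Y * (X + Y) powr (q - 1)\<close>
  show "X powr q + Y powr q < (X + Y) powr q"
    using split[OF X] split[OF Y] split[of "X + Y"] X Y by (simp add: algebra_simps)
qed

text \<open>Here \<open>d\<^sup>p = (X + y\<^sup>2)\<^bsup>p/2\<^esup>\<close> with \<open>X = (1 - t) (r\<^sup>2 - t) \<ge> 0\<close>: superadditivity of
  \<open>x \<mapsto> x\<^bsup>p/2\<^esup>\<close> splits off \<open>y\<^sup>p\<close>, and \<open>shifted_powr_le\<close> with exponent \<open>p/2\<close>, applied to
  \<open>r\<^sup>2 \<le> (r\<^sup>2 - t) + t\<close>, bounds \<open>X\<^bsup>p/2\<^esup>\<close>.\<close>

lemma large_modulus_bound:
  fixes p t r d y c :: real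
  assumes p: "p \<ge> 2" and t: "0 < t" "t < 1" and r: "r \<ge> 0" "t \<le> r\<^sup>2"
    and dy: "d \<ge> 0" "y \<ge> 0" and c: "c \<le> 1"
    and d: "d\<^sup>2 = (1 - t) * (r\<^sup>2 - t) + y\<^sup>2"
  shows "(1 - t) powr (p - 1) * (r powr p - t) + c * y powr p \<le> d powr p"
    and "p > 2 \<Longrightarrow> y > 0 \<Longrightarrow> (1 - t) powr (p - 1) * (r powr p - t) + c * y powr p < d powr p"
proof -
  define q where "q = p / 2"
  define X where "X = (1 - t) * (r\<^sup>2 - t)"
  have q: "q \<ge> 1" using p by (simp add: q_def)
  have X: "X \<ge> 0" using t r by (simp add: X_def)
  have half: "x powr p = (x\<^sup>2) powr q" if "x \<ge> 0" for x
    using that by (simp add: q_def powr_powr flip: powr_numeral)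
  have dX: "d powr p = (X + y\<^sup>2) powr q" using half[OF dy(1)] d by (simp add: X_def)
  have Xq: "X powr q = (1 - t) powr q * (r\<^sup>2 - t) powr q" using t r by (simp add: X_def powr_mult)
  have exponent: "(1 - t) powr q * ((1 - t) powr (q - 1) * Z) = (1 - t) powr (p - 1) * Z" for Z
    using t by (simp add: q_def powr_add[symmetric])
  have cy: "c * y powr p \<le> (y\<^sup>2) powr q"
    using mult_right_mono[OF c, of "y powr p"] half[OF dy(2)] by simp
  have "(1 - t) powr (q - 1) * ((r\<^sup>2) powr q - t) \<le> (r\<^sup>2 - t) powr q"
    using shifted_powr_le[OF q, of t "r\<^sup>2" "r\<^sup>2 - t"] t r by simp
  from mult_left_mono[OF this, of "(1 - t) powr q"]
  have bound: "(1 - t) powr (p - 1) * (r powr p - t) \<le> X powr q"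
    unfolding Xq exponent half[OF r(1)] by simp
  show "(1 - t) powr (p - 1) * (r powr p - t) + c * y powr p \<le> d powr p"
    using bound cy powr_add_ge_add_powr(1)[OF X _ q, of "y\<^sup>2"] dX by simp
  assume p2: "p > 2" and y0: "y > 0"
  then have q1: "q > 1" by (simp add: q_def)
  show "(1 - t) powr (p - 1) * (r powr p - t) + c * y powr p < d powr p"
  proof (cases "X = 0")
    case True
    then have "r\<^sup>2 = t" using t by (simp add: X_def)
    then have "(1 - t) powr (q - 1) * ((r\<^sup>2) powr q - t) < (r\<^sup>2 - t) powr q"
      using shifted_powr_less[OF q1, of t "r\<^sup>2" "r\<^sup>2 - t"] t by simp
    from mult_strict_left_mono[OF this, of "(1 - t) powr q"]
    have "(1 - t) powr (p - 1) * (r powr p - t) < X powr q"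
      unfolding Xq exponent half[OF r(1)] using t by simp
    then show ?thesis using cy powr_add_ge_add_powr(1)[OF X _ q, of "y\<^sup>2"] dX by simp
  next
    case False
    then show ?thesis
      using bound cy powr_add_ge_add_powr(2)[OF X _ q _ _ q1, of "y\<^sup>2"] X y0 dX by simp
  qed
qed

lemma norm_diff_of_real_square:
  fixes a :: complex
  shows "(cmod (a - complex_of_real t))\<^sup>2 = (1 - t) * ((cmod a)\<^sup>2 - t) + t * (cmod (a - 1))\<^sup>2"
  unfolding cmod_power2 by (simp add: power2_eq_square algebra_simps)

lemma norm_diff_of_real_powr_ge_cconst:
  fixes a :: complex
  assumes p: "p \<ge> 2" and t: "0 < t" "t < 1"
  shows "(1 - t) powr (p - 1) * (cmod a powr p - t) + cconst p * t powr (p / 2) * cmod (a - 1) powr p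
      \<le> cmod (a - complex_of_real t) powr p"
    and "p > 2 \<Longrightarrow> a \<noteq> 1 \<Longrightarrow>
      (1 - t) powr (p - 1) * (cmod a powr p - t) + cconst p * t powr (p / 2) * cmod (a - 1) powr p
      < cmod (a - complex_of_real t) powr p"
proof -
  define d r s y where "d = cmod (a - complex_of_real t)" and "r = cmod a"
    and "s = sqrt t" and "y = sqrt t * cmod (a - 1)"
  have s: "0 < s" "s < 1" "s\<^sup>2 = t" using t by (auto simp: s_def)
  have d: "d\<^sup>2 = (1 - t) * (r\<^sup>2 - t) + y\<^sup>2"
    using norm_diff_of_real_square[of a t] t by (simp add: d_def r_def y_def power_mult_distrib)
  have "t powr (p / 2) * cmod (a - 1) powr p = y powr p"
    using t by (simp add: y_def powr_mult powr_half_sqrt[symmetric] powr_powr)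
  then have rhs: "(1 - t) powr (p - 1) * (cmod a powr p - t) + cconst p * t powr (p / 2) * cmod (a - 1) powr p
      = (1 - t) powr (p - 1) * (r powr p - t) + cconst p * y powr p"
    by (simp add: r_def mult.assoc)
  have y: "y \<ge> 0" "a \<noteq> 1 \<Longrightarrow> y > 0" using t by (simp_all add: y_def)
  have "(1 - t) powr (p - 1) * (r powr p - t) + cconst p * y powr p \<le> d powr p
      \<and> (p > 2 \<longrightarrow> a \<noteq> 1 \<longrightarrow> (1 - t) powr (p - 1) * (r powr p - t) + cconst p * y powr p < d powr p)"
  proof (cases "t \<le> r\<^sup>2")
    case True
    then show ?thesis
      using large_modulus_bound[OF p t _ True _ y(1) cconst_le_1[OF p] d] y(2)
      by (auto simp: d_def r_def)
  next
    case False
    then have "r < s" using s by (intro power_less_imp_less_base[of r 2 s]) auto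
    moreover have "s\<^sup>2 - r \<le> d"
      using norm_triangle_ineq2[of "complex_of_real t" a] t s by (simp add: d_def r_def norm_minus_commute)
    moreover have "s * (1 - r) \<le> y"
      using norm_triangle_ineq2[of 1 a] s by (simp add: y_def r_def s_def[symmetric] norm_minus_commute mult_left_mono)
    moreover have "y\<^sup>2 - d\<^sup>2 = (1 - s\<^sup>2) * (s\<^sup>2 - r\<^sup>2)" using d s by (simp add: algebra_simps)
    ultimately show ?thesis
      using small_modulus_bound[OF p s(1,2), of r d y] s(3) by (auto simp: d_def r_def)
  qed
  then show "(1 - t) powr (p - 1) * (cmod a powr p - t) + cconst p * t powr (p / 2) * cmod (a - 1) powr p
      \<le> cmod (a - complex_of_real t) powr p"
    and "p > 2 \<Longrightarrow> a \<noteq> 1 \<Longrightarrow>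
      (1 - t) powr (p - 1) * (cmod a powr p - t) + cconst p * t powr (p / 2) * cmod (a - 1) powr p
      < cmod (a - complex_of_real t) powr p"
    unfolding rhs by (simp_all add: d_def)
qed

lemma rpow_norm_diff_of_real_powr_ge_cconst:
  fixes a :: complex
  assumes p: "p \<ge> 2" and t: "0 \<le> t" "t \<le> 1"
  shows "rpow (1 - t) (p - 1) * (cmod a powr p - t) + cconst p * t powr (p / 2) * cmod (a - 1) powr p
      \<le> cmod (a - complex_of_real t) powr p"
proof -
  consider "t = 0" | "t = 1" | "0 < t" "t < 1" using t by linarith
  then show ?thesis
  proof cases
    case 2
    then show ?thesis
      using mult_right_mono[OF cconst_le_1[OF p], of "cmod (a - 1) powr p"] p by (simp add: rpow_def)
  next
    case 3
    then show ?thesis using norm_diff_of_real_powr_ge_cconst(1)[OF p, of t a] by (simp add: rpow_pos)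
  qed (simp add: rpow_def)
qed

lemma rpow_norm_diff_of_real_powr_gt_cconst:
  fixes a :: complex
  assumes p: "p > 2" and t: "0 < t" "t \<le> 1" and a: "a \<noteq> 1"
  shows "rpow (1 - t) (p - 1) * (cmod a powr p - t) + cconst p * t powr (p / 2) * cmod (a - 1) powr p
      < cmod (a - complex_of_real t) powr p"
proof (cases "t = 1")
  case True
  then show ?thesis
    using mult_strict_right_mono[OF cconst_less_1[OF p], of "cmod (a - 1) powr p"] p a
    by (simp add: rpow_def)
next
  case False
  then show ?thesis using norm_diff_of_real_powr_ge_cconst(2)[OF _ _ _ p a] p t by (simp add: rpow_pos)
qed

theorem lemma2p6:
  fixes p :: real
  assumes "p \<ge> 1"
  shows
   "(\<forall>t a. 0 \<le> t \<and> t \<le> 1 \<longrightarrow>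
       cmod (a - complex_of_real t) powr p \<ge> rpow (1 - t) (p - 1) * (cmod a powr p - t))
  \<and> (p > 1 \<longrightarrow> (\<forall>t a. 0 \<le> t \<and> t \<le> 1 \<and> a \<noteq> 1 \<and> t \<noteq> 0 \<longrightarrow>
       cmod (a - complex_of_real t) powr p > rpow (1 - t) (p - 1) * (cmod a powr p - t)))
  \<and> (p \<ge> 2 \<longrightarrow>
       (\<exists>\<tau>\<in>{0<..<1/2}. cfun p \<tau> = cconst p)
     \<and> (\<forall>\<tau>\<in>{0<..<1/2}. cconst p \<le> cfun p \<tau>)
     \<and> 0 < cconst p \<and> cconst p \<le> 1
     \<and> (\<forall>t a. 0 \<le> t \<and> t \<le> 1 \<longrightarrow>
          cmod (a - complex_of_real t) powr p \<ge>
            rpow (1 - t) (p - 1) * (cmod a powr p - t) + cconst p * t powr (p / 2) * cmod (a - 1) powr p))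
  \<and> (p = 2 \<longrightarrow> cconst p = 1 \<and> (\<forall>t a. 0 \<le> t \<and> t \<le> 1 \<longrightarrow>
          cmod (a - complex_of_real t) powr p =
            rpow (1 - t) (p - 1) * (cmod a powr p - t) + cconst p * t powr (p / 2) * cmod (a - 1) powr p))
  \<and> (p > 2 \<longrightarrow> (\<forall>t a. 0 \<le> t \<and> t \<le> 1 \<and> a \<noteq> 1 \<and> t \<noteq> 0 \<longrightarrow>
          cmod (a - complex_of_real t) powr p >
            rpow (1 - t) (p - 1) * (cmod a powr p - t) + cconst p * t powr (p / 2) * cmod (a - 1) powr p))"
proof -
  have "cconst p = 1 \<and> (\<forall>t a. 0 \<le> t \<and> t \<le> 1 \<longrightarrow>
          cmod (a - complex_of_real t) powr p =
            rpow (1 - t) (p - 1) * (cmod a powr p - t) + cconst p * t powr (p / 2) * cmod (a - 1) powr p)"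
    if "p = 2"
    using that norm_diff_of_real_square cconst_two by (simp add: rpow_def)
  moreover have "\<exists>\<tau>\<in>{0<..<1/2}. cfun p \<tau> = cconst p" if "p \<ge> 2"
    using cconst_attained[OF that] by metis
  ultimately show ?thesis
    using assms by (auto simp: rpow_norm_diff_of_real_powr_ge rpow_norm_diff_of_real_powr_less
      rpow_norm_diff_of_real_powr_ge_cconst rpow_norm_diff_of_real_powr_gt_cconst
      cconst_le_cfun cconst_pos cconst_le_1)
qed

end
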